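(* Let $p(L,M,D;\mu=1)$ be a generative reasoning model, let $\alpha\in L$, and let $\Delta\subseteq L$ be a finite set such that $[\![\Delta]\!]=[\![\Delta]\!]_p$ and $[\![\Delta]\!]\neq\emptyset$. Then $p(\alpha\mid\Delta)=1$ if and only if $\Delta\models\alpha$.
   Context: Fix a multiset of data $\{d_1,\dots,d_K\}$ with $K\ge1$, and a propositional language $L$ over finitely many atoms, with set of models (truth assignments) $\mathcal M$. A function $m:\{d_1,\dots,d_K\}\to\mathcal M$ assigns to each datum the model it supports. The probability of a model $n$ is $p(n)=|\{k:m(d_k)=n\}|/K$. For a parameter $\mu\in[0,1]$ and $\alpha\in L$, set $p(\alpha\mid m)=\mu$ if $m$ satisfies $\alpha$ and $1-\mu$ otherwise. For finite $\Delta\subseteq L$, set $p(\Delta\mid m)=\prod_{\beta\in\Delta}p(\beta\mid m)$, which is $1$ for empty $\Delta$. Define $$p(\alpha\mid\Delta)=\frac{\sum_{m}p(\alpha\mid m)p(\Delta\mid m)p(m)}{\sum_m p(\Delta\mid m)p(m)}.$$ This is the generative reasoning model $p(L,M,D;\mu)$. For $\mu=1$ the expression is evaluated at $\mu=1$, and it is undefined when the denominator is $0$. Notation: - $[\![\Delta]\!]$ is the set of models satisfying every formula in $\Delta$, and $[\![\alpha]\!]=[\![\{\alpha\}]\!]$. - $[\![\Delta]\!]_p=\{m\in[\![\Delta]\!]:p(m)\neq0\}$. - $\Delta\models\alpha$ (classical consequence) means $[\![\Delta]\!]\subseteq[\![\alpha]\!]$. *)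

theory Defs
  imports Complex_Main "HOL-Library.Multiset"
begin

datatype 'a form =
    Atom 'a | Bot | Neg "'a form" | Conj "'a form" "'a form"
  | Disj "'a form" "'a form" | Imp "'a form" "'a form"

type_synonym 'a model = "'a \<Rightarrow> bool"

fun sat :: "'a model \<Rightarrow> 'a form \<Rightarrow> bool" where
  "sat v (Atom a) = v a"
| "sat v Bot = False"
| "sat v (Neg f) = (\<not> sat v f)"
| "sat v (Conj f g) = (sat v f \<and> sat v g)"
| "sat v (Disj f g) = (sat v f \<or> sat v g)"
| "sat v (Imp f g) = (sat v f \<longrightarrow> sat v g)"

definition models :: "'a form set \<Rightarrow> 'a model set" where
  "models \<Delta> = {v. \<forall>\<beta>\<in>\<Delta>. sat v \<beta>}"

definition models1 :: "'a form \<Rightarrow> 'a model set" where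
  "models1 \<alpha> = models {\<alpha>}"

definition pM :: "'d multiset \<Rightarrow> ('d \<Rightarrow> 'a model) \<Rightarrow> 'a model \<Rightarrow> real" where
  "pM D m n = real (size (filter_mset (\<lambda>d. m d = n) D)) / real (size D)"

definition models_p :: "'d multiset \<Rightarrow> ('d \<Rightarrow> 'a model) \<Rightarrow> 'a form set \<Rightarrow> 'a model set" where
  "models_p D m \<Delta> = {v \<in> models \<Delta>. pM D m v \<noteq> 0}"

definition entails :: "'a form set \<Rightarrow> 'a form \<Rightarrow> bool" where
  "entails \<Delta> \<alpha> \<longleftrightarrow> models \<Delta> \<subseteq> models1 \<alpha>"

definition p_form_model :: "real \<Rightarrow> 'a form \<Rightarrow> 'a model \<Rightarrow> real" where
  "p_form_model \<mu> \<alpha> v = (if sat v \<alpha> then \<mu> else 1 - \<mu>)"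

definition p_set_model :: "real \<Rightarrow> 'a form set \<Rightarrow> 'a model \<Rightarrow> real" where
  "p_set_model \<mu> \<Delta> v = (\<Prod>\<beta>\<in>\<Delta>. p_form_model \<mu> \<beta> v)"

text \<open>p(alpha | Delta) in the generative reasoning model p(L,M,D;mu).
  (Isabelle's division by 0 yields 0; the paper leaves it undefined.)\<close>
definition p_cond :: "real \<Rightarrow> 'd multiset \<Rightarrow> ('d \<Rightarrow> ('a::finite) model) \<Rightarrow> 'a form \<Rightarrow> 'a form set \<Rightarrow> real" where
  "p_cond \<mu> D m \<alpha> \<Delta> =
     (\<Sum>v\<in>UNIV. p_form_model \<mu> \<alpha> v * p_set_model \<mu> \<Delta> v * pM D m v) /
     (\<Sum>v\<in>UNIV. p_set_model \<mu> \<Delta> v * pM D m v)"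

end

theory Submission
  imports Defs
begin

text \<open>At \<open>\<mu> = 1\<close> the factor \<open>p(\<Delta> | v)\<close> is the indicator of \<open>\<lbrakk>\<Delta>\<rbrakk>\<close>, so \<open>p(\<alpha> | \<Delta>)\<close> is the
  \<open>p\<close>-mass of \<open>\<lbrakk>\<Delta>\<rbrakk> \<inter> \<lbrakk>\<alpha>\<rbrakk>\<close> divided by that of \<open>\<lbrakk>\<Delta>\<rbrakk>\<close>. When every model of \<open>\<Delta>\<close> has
  positive probability, this ratio is 1 exactly when no model of \<open>\<Delta>\<close> falsifies \<open>\<alpha>\<close>.\<close>

lemma models1_eq: "models1 \<alpha> = {v. sat v \<alpha>}"
  by (simp add: models1_def models_def)

lemma p_form_model_1: "p_form_model 1 \<alpha> v = (if v \<in> models1 \<alpha> then 1 else 0)"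
  by (simp add: p_form_model_def models1_eq)

lemma p_set_model_1:
  assumes "finite \<Delta>"
  shows "p_set_model 1 \<Delta> v = (if v \<in> models \<Delta> then 1 else 0)"
  using assms
  by (auto simp: p_set_model_def p_form_model_1 models1_eq models_def prod_zero_iff)

lemma pM_nonneg: "pM D m v \<ge> 0"
  by (simp add: pM_def)

lemma pM_pos_if_in_models_p:
  assumes "v \<in> models_p D m \<Delta>"
  shows "pM D m v > 0"
  using assms pM_nonneg[of D m v] by (simp add: models_p_def)

lemma p_cond_1_eq_mass_ratio:
  assumes "finite \<Delta>"
  shows "p_cond 1 D m \<alpha> \<Delta> =
    (\<Sum>v\<in>models \<Delta> \<inter> models1 \<alpha>. pM D m v) / (\<Sum>v\<in>models \<Delta>. pM D m v)"
proof -
  have "(\<Sum>v\<in>UNIV. p_form_model 1 \<alpha> v * p_set_model 1 \<Delta> v * pM D m v) =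
      (\<Sum>v\<in>UNIV \<inter> (models \<Delta> \<inter> models1 \<alpha>). pM D m v)"
    by (subst sum.inter_restrict) (auto simp: p_set_model_1[OF assms] p_form_model_1 intro: sum.cong)
  moreover have "(\<Sum>v\<in>UNIV. p_set_model 1 \<Delta> v * pM D m v) = (\<Sum>v\<in>UNIV \<inter> models \<Delta>. pM D m v)"
    by (subst sum.inter_restrict) (auto simp: p_set_model_1[OF assms] intro: sum.cong)
  ultimately show ?thesis
    by (simp add: p_cond_def)
qed

lemma sum_Int_div_sum_eq_1_iff:
  fixes f :: "'a \<Rightarrow> real"
  assumes "finite S" and "S \<noteq> {}" and "\<And>x. x \<in> S \<Longrightarrow> f x > 0"
  shows "(\<Sum>x\<in>S \<inter> A. f x) / (\<Sum>x\<in>S. f x) = 1 \<longleftrightarrow> S \<subseteq> A"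
proof -
  have "(\<Sum>x\<in>S. f x) > 0"
    using assms by (intro sum_pos) auto
  moreover have "(\<Sum>x\<in>S. f x) = (\<Sum>x\<in>S \<inter> A. f x) + (\<Sum>x\<in>S - A. f x)"
    using assms(1) by (rule sum.Int_Diff)
  moreover have "(\<Sum>x\<in>S - A. f x) = 0 \<longleftrightarrow> S - A = {}"
    using assms by (subst sum_nonneg_eq_0_iff) (fastforce intro: less_imp_le)+
  ultimately show ?thesis
    by auto
qed

theorem corollary1:
  fixes D :: "'d multiset" and m :: "'d \<Rightarrow> ('a::finite) model"
    and \<alpha> :: "'a form" and \<Delta> :: "'a form set"
  assumes "D \<noteq> {#}"
    and "finite \<Delta>"
    and "models \<Delta> = models_p D m \<Delta>"
    and "models \<Delta> \<noteq> {}"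
  shows "p_cond 1 D m \<alpha> \<Delta> = 1 \<longleftrightarrow> entails \<Delta> \<alpha>"
proof -
  have "p_cond 1 D m \<alpha> \<Delta> = 1 \<longleftrightarrow> models \<Delta> \<subseteq> models1 \<alpha>"
    unfolding p_cond_1_eq_mass_ratio[OF assms(2)]
    using assms(4) pM_pos_if_in_models_p assms(3)
    by (intro sum_Int_div_sum_eq_1_iff) auto
  then show ?thesis
    by (simp add: entails_def)
qed

end
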